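(* Let $\{\mathcal H,\Gamma_0,\Gamma_1\}$ be a unitary boundary triple for $A^*$ with Weyl function $M(\cdot)$. Then the mapping $\Gamma_0$ (from $\mathfrak H^2$ to $\mathcal H$) is closable if and only if for some (equivalently, for every) $\lambda\in\mathbb C\setminus\mathbb R$ the following holds: whenever $h_n\in\operatorname{dom}M(\lambda)$, $h_n\to h$ in $\mathcal H$ and $\operatorname{Im}(M(\lambda)h_n,h_n)\to0$ as $n\to\infty$, then $h=0$.
   Context: $A$ is a closed symmetric relation in $\mathfrak H$. A unitary boundary triple for $A^*$: a linear operator $\Gamma=\{\Gamma_0,\Gamma_1\}$ from $\mathfrak H^2$ to $\mathcal H^2$ with $\operatorname{dom}\Gamma\subset A^*$ dense in $A^*$ such that $\Gamma^{-1}=\Gamma^{[*]}$, where $\Gamma^{[*]}=\{\{\{k,k'\},\{g,g'\}\}:(f',g)-(f,g')=(h',k)-(h,k')\text{ for all }\{\{f,f'\},\{h,h'\}\}\in\Gamma\}$. Weyl function: $M(\lambda)\Gamma_0\hat f_\lambda=\Gamma_1\hat f_\lambda$ for $\hat f_\lambda=\{f_\lambda,\lambda f_\lambda\}\in\operatorname{dom}\Gamma$. Closable means that the closure of the graph of $\Gamma_0$ in $\mathfrak H^2\times\mathcal H$ is the graph of an operator. *)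

theory Defs
  imports "HOL-Analysis.Analysis"
begin

class complex_vector = real_vector +
  fixes scaleC :: "complex \<Rightarrow> 'a \<Rightarrow> 'a"
  assumes scaleC_add_right: "scaleC a (x + y) = scaleC a x + scaleC a y"
    and scaleC_add_left: "scaleC (a + b) x = scaleC a x + scaleC b x"
    and scaleC_scaleC: "scaleC a (scaleC b x) = scaleC (a * b) x"
    and scaleC_one: "scaleC 1 x = x"
    and scaleR_scaleC: "scaleR r x = scaleC (complex_of_real r) x"

instantiation prod :: (complex_vector, complex_vector) complex_vector
begin
definition scaleC_prod :: "complex \<Rightarrow> 'a \<times> 'b \<Rightarrow> 'a \<times> 'b" where
  "scaleC_prod c x = (scaleC c (fst x), scaleC c (snd x))"
instance
  by standard (simp_all add: scaleC_prod_def scaleC_add_right scaleC_add_left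
      scaleC_scaleC scaleR_prod_def scaleR_scaleC scaleC_one prod_eq_iff)
end

class complex_inner = complex_vector + real_normed_vector +
  fixes cinner :: "'a \<Rightarrow> 'a \<Rightarrow> complex"
  assumes cinner_commute: "cinner x y = cnj (cinner y x)"
    and cinner_add_left: "cinner (x + y) z = cinner x z + cinner y z"
    and cinner_scaleC_left: "cinner (scaleC c x) y = c * cinner x y"
    and cinner_self_norm: "cinner x x = complex_of_real ((norm x)\<^sup>2)"

class chilbert_space = complex_inner + complete_space

definition csubspace :: "'a::complex_vector set \<Rightarrow> bool" where
  "csubspace S \<longleftrightarrow> 0 \<in> S \<and> (\<forall>x\<in>S. \<forall>y\<in>S. x + y \<in> S) \<and> (\<forall>c. \<forall>x\<in>S. scaleC c x \<in> S)"

definition is_operator :: "('a \<times> 'b) set \<Rightarrow> bool" where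
  "is_operator R \<longleftrightarrow> (\<forall>x y z. (x, y) \<in> R \<longrightarrow> (x, z) \<in> R \<longrightarrow> y = z)"

definition adjoint_rel :: "('h::complex_inner \<times> 'h) set \<Rightarrow> ('h \<times> 'h) set" where
  "adjoint_rel A = {(g, g'). \<forall>(f, f') \<in> A. cinner f' g = cinner f g'}"

definition closed_symmetric_rel :: "('h::complex_inner \<times> 'h) set \<Rightarrow> bool" where
  "closed_symmetric_rel A \<longleftrightarrow> csubspace A \<and> closed A \<and> A \<subseteq> adjoint_rel A"

text \<open>The Krein-space adjoint \<open>\<Gamma>\<^sup>[*]\<close> of a relation from \<open>\<frak>H\<^sup>2\<close> to \<open>\<H>\<^sup>2\<close>.\<close>
definition bt_adjoint ::
  "(('h::complex_inner \<times> 'h) \<times> ('k::complex_inner \<times> 'k)) set \<Rightarrow> (('k \<times> 'k) \<times> ('h \<times> 'h)) set" where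
  "bt_adjoint \<Gamma> = {((k, k'), (g, g')).
     \<forall>((f, f'), (h, h')) \<in> \<Gamma>. cinner f' g - cinner f g' = cinner h' k - cinner h k'}"

definition unitary_boundary_triple ::
  "('h::complex_inner \<times> 'h) set \<Rightarrow> (('h \<times> 'h) \<times> ('k::complex_inner \<times> 'k)) set \<Rightarrow> bool" where
  "unitary_boundary_triple A \<Gamma> \<longleftrightarrow>
     csubspace \<Gamma> \<and> is_operator \<Gamma> \<and>
     Domain \<Gamma> \<subseteq> adjoint_rel A \<and> adjoint_rel A \<subseteq> closure (Domain \<Gamma>) \<and>
     converse \<Gamma> = bt_adjoint \<Gamma>"

definition Gamma0 :: "(('h \<times> 'h) \<times> ('k \<times> 'k)) set \<Rightarrow> (('h \<times> 'h) \<times> 'k) set" where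
  "Gamma0 \<Gamma> = {(fh, h). \<exists>h'. (fh, (h, h')) \<in> \<Gamma>}"

definition closable :: "('a::topological_space \<times> 'b::topological_space) set \<Rightarrow> bool" where
  "closable R \<longleftrightarrow> is_operator (closure R)"

text \<open>Weyl function \<open>M(\<lambda>)\<close> as the relation
  \<open>{(\<Gamma>\<^sub>0 f\<^sub>\<lambda>, \<Gamma>\<^sub>1 f\<^sub>\<lambda>) : f\<^sub>\<lambda> = {f, \<lambda> f} \<in> dom \<Gamma>}\<close>.\<close>
definition weyl_rel :: "(('h::complex_vector \<times> 'h) \<times> ('k \<times> 'k)) set \<Rightarrow> complex \<Rightarrow> ('k \<times> 'k) set" where
  "weyl_rel \<Gamma> z = {(h, h'). \<exists>f. ((f, scaleC z f), (h, h')) \<in> \<Gamma>}"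

end

theory Submission
  imports Defs
begin

text \<open>Writing \<open>\<Gamma>\<close> in terms of its main transform
  \<open>T = {{(f, h), (f', -h')} : {{f, f'}, {h, h'}} \<in> \<Gamma>}\<close>, the identity \<open>\<Gamma>\<^sup>-\<^sup>1 = \<Gamma>\<^sup>[\<^sup>*\<^sup>]\<close> says
  precisely that \<open>T\<close> is a self-adjoint relation in \<open>\<frak>H \<times> \<H>\<close>. Hence for nonreal \<open>\<lambda>\<close> the
  relation \<open>T - \<lambda>\<close> is onto with inverse bounded by \<open>1/|Im \<lambda>|\<close>, and Green's identity
  gives \<open>Im (h', h) = Im \<lambda> \<parallel>f\<parallel>\<^sup>2\<close> whenever \<open>\<Gamma>{f, \<lambda> f} = {h, h'}\<close>. The Weyl condition thus
  says that \<open>\<Gamma>\<^sub>0\<close> is closable along sequences \<open>{f\<^sub>n, \<lambda> f\<^sub>n} \<rightarrow> 0\<close>. A general sequence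
  \<open>{f\<^sub>n, f\<^sub>n'} \<rightarrow> 0\<close> in \<open>dom \<Gamma>\<close> is reduced to this case by subtracting the solution of
  \<open>(T - \<lambda>){a\<^sub>n, b\<^sub>n} = {f\<^sub>n' - \<lambda> f\<^sub>n, 0}\<close>, which tends to \<open>0\<close> by the resolvent bound.\<close>

section \<open>Complex inner product spaces\<close>

lemma scaleC_minus1_left: "scaleC (-1) (x::'a::complex_vector) = - x"
  using scaleR_scaleC[of "-1" x] by simp

lemma scaleC_zero_right[simp]: "scaleC c (0::'a::complex_vector) = 0"
  using scaleC_add_right[of c 0 0] by simp

lemma scaleC_minus_right: "scaleC c (- x::'a::complex_vector) = - scaleC c x"
  by (metis scaleC_minus1_left scaleC_scaleC mult.commute)

lemma scaleC_diff_right: "scaleC c (x - y::'a::complex_vector) = scaleC c x - scaleC c y"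
  by (simp only: diff_conv_add_uminus scaleC_add_right scaleC_minus_right)

lemma fst_scaleC[simp]: "fst (scaleC c x) = scaleC c (fst x)"
  by (simp add: scaleC_prod_def)

lemma snd_scaleC[simp]: "snd (scaleC c x) = scaleC c (snd x)"
  by (simp add: scaleC_prod_def)

lemma cinner_zero_left[simp]:
  fixes y :: "'a::complex_inner"
  shows "cinner 0 y = 0"
  using cinner_add_left[of 0 0 y] by simp

lemma cinner_zero_right[simp]:
  fixes x :: "'a::complex_inner"
  shows "cinner x 0 = 0"
  using cinner_commute[of x 0] by simp

lemma cinner_minus_left:
  fixes x y :: "'a::complex_inner"
  shows "cinner (- x) y = - cinner x y"
  using cinner_scaleC_left[of "-1" x y] by (simp add: scaleC_minus1_left)

lemma cinner_diff_left:
  fixes x y z :: "'a::complex_inner"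
  shows "cinner (x - y) z = cinner x z - cinner y z"
  by (simp only: diff_conv_add_uminus cinner_add_left cinner_minus_left)

lemma cinner_add_right:
  fixes x y z :: "'a::complex_inner"
  shows "cinner x (y + z) = cinner x y + cinner x z"
  by (subst (1 2 3) cinner_commute) (simp add: cinner_add_left)

lemma cinner_scaleC_right:
  fixes x y :: "'a::complex_inner"
  shows "cinner x (scaleC c y) = cnj c * cinner x y"
  by (subst (1 2) cinner_commute) (simp add: cinner_scaleC_left)

lemma cinner_minus_right:
  fixes x y :: "'a::complex_inner"
  shows "cinner x (- y) = - cinner x y"
  by (subst (1 2) cinner_commute) (simp add: cinner_minus_left)

lemma cinner_diff_right:
  fixes x y z :: "'a::complex_inner"
  shows "cinner x (y - z) = cinner x y - cinner x z"
  by (simp only: diff_conv_add_uminus cinner_add_right cinner_minus_right)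

lemmas cinner_simps = cinner_add_left cinner_add_right cinner_diff_left cinner_diff_right
  cinner_minus_left cinner_minus_right cinner_scaleC_left cinner_scaleC_right

lemma norm_diff_projection_squared:
  fixes x y :: "'a::complex_inner"
  assumes "y \<noteq> 0"
  shows "(norm (x - scaleC (cinner x y / (norm y)\<^sup>2) y))\<^sup>2 = (norm x)\<^sup>2 - (cmod (cinner x y))\<^sup>2 / (norm y)\<^sup>2"
proof -
  define a where "a = cinner x y"
  define Y where "Y = (norm y)\<^sup>2"
  define t where "t = a / complex_of_real Y"
  have Y: "Y > 0" using assms by (simp add: Y_def)
  have "cinner (x - scaleC t y) (x - scaleC t y)
      = cinner x x - cnj t * cinner x y - t * cinner y x + t * cnj t * cinner y y"
    by (simp add: cinner_simps algebra_simps)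
  also have "\<dots> = cinner x x - cnj t * a - t * cnj a + t * cnj t * complex_of_real Y"
    by (simp add: a_def Y_def cinner_self_norm flip: cinner_commute[of y x])
  also have "\<dots> = cinner x x - a * cnj a / complex_of_real Y"
    using Y by (simp add: t_def field_simps)
  also have "\<dots> = complex_of_real ((norm x)\<^sup>2 - (cmod a)\<^sup>2 / Y)"
    by (simp add: cinner_self_norm flip: complex_norm_square)
  finally show ?thesis
    unfolding a_def Y_def t_def cinner_self_norm of_real_eq_iff by simp
qed

lemma cauchy_schwarz:
  fixes x y :: "'a::complex_inner"
  shows "cmod (cinner x y) \<le> norm x * norm y"
proof (cases "y = 0")
  case False
  have "(cmod (cinner x y))\<^sup>2 / (norm y)\<^sup>2 \<le> (norm x)\<^sup>2"
    using norm_diff_projection_squared[OF False, of x] by (smt (verit) zero_le_power2)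
  then have "(cmod (cinner x y))\<^sup>2 \<le> (norm x * norm y)\<^sup>2"
    using False by (simp add: power_mult_distrib divide_le_eq)
  then show ?thesis by (simp add: abs_le_square_iff)
qed simp

lemma bounded_bilinear_cinner: "bounded_bilinear (cinner :: 'a::complex_inner \<Rightarrow> 'a \<Rightarrow> complex)"
proof
  show "\<exists>K. \<forall>x y :: 'a. cmod (cinner x y) \<le> norm x * norm y * K"
    using cauchy_schwarz by (metis mult.right_neutral)
qed (simp_all add: cinner_simps scaleR_scaleC scaleR_conv_of_real)

lemmas continuous_on_cinner[continuous_intros] =
  bounded_bilinear.continuous_on[OF bounded_bilinear_cinner]

lemma norm_scaleC:
  fixes x :: "'a::complex_inner"
  shows "norm (scaleC c x) = cmod c * norm x"
proof -
  have "complex_of_real ((norm (scaleC c x))\<^sup>2) = c * cnj c * cinner x x"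
    by (simp only: cinner_simps mult.left_commute mult.assoc flip: cinner_self_norm)
  also have "\<dots> = complex_of_real ((cmod c * norm x)\<^sup>2)"
    by (simp add: cinner_self_norm power_mult_distrib flip: complex_norm_square)
  finally have "complex_of_real ((norm (scaleC c x))\<^sup>2) = complex_of_real ((cmod c * norm x)\<^sup>2)" .
  then have "(norm (scaleC c x))\<^sup>2 = (cmod c * norm x)\<^sup>2" by (simp only: of_real_eq_iff)
  then show ?thesis by (simp add: power2_eq_iff_nonneg)
qed

lemma bounded_linear_scaleC: "bounded_linear (scaleC c :: 'a::complex_inner \<Rightarrow> 'a)"
proof
  show "\<exists>K. \<forall>x::'a. norm (scaleC c x) \<le> norm x * K"
    by (metis norm_scaleC mult.commute order_refl)
qed (simp_all add: scaleC_add_right scaleR_scaleC scaleC_scaleC mult.commute)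

lemmas tendsto_scaleC[tendsto_intros] = bounded_linear.tendsto[OF bounded_linear_scaleC]

lemma parallelogram_law:
  fixes x y :: "'a::complex_inner"
  shows "(norm (x + y))\<^sup>2 + (norm (x - y))\<^sup>2 = 2 * (norm x)\<^sup>2 + 2 * (norm y)\<^sup>2"
proof -
  have "cinner (x + y) (x + y) + cinner (x - y) (x - y) = 2 * cinner x x + 2 * cinner y y"
    by (simp add: cinner_simps)
  then have "complex_of_real ((norm (x + y))\<^sup>2 + (norm (x - y))\<^sup>2)
      = complex_of_real (2 * (norm x)\<^sup>2 + 2 * (norm y)\<^sup>2)"
    by (simp add: cinner_self_norm)
  then show ?thesis by (simp only: of_real_eq_iff)
qed

instantiation prod :: (complex_inner, complex_inner) complex_inner
begin

definition cinner_prod_def: "cinner x y = cinner (fst x) (fst y) + cinner (snd x) (snd y)"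

instance
proof
  fix x y z :: "'a \<times> 'b" and c :: complex
  show "cinner x y = cnj (cinner y x)"
    unfolding cinner_prod_def by (simp flip: cinner_commute)
  show "cinner (x + y) z = cinner x z + cinner y z"
    unfolding cinner_prod_def by (simp add: cinner_add_left)
  show "cinner (scaleC c x) y = c * cinner x y"
    unfolding cinner_prod_def by (simp add: cinner_scaleC_left algebra_simps)
  show "cinner x x = complex_of_real ((norm x)\<^sup>2)"
    unfolding cinner_prod_def norm_prod_def by (simp add: cinner_self_norm)
qed

end

instance prod :: (chilbert_space, chilbert_space) chilbert_space ..

lemma cinner_Pair: "cinner (a, b) (c, d) = cinner a c + cinner b d"
  by (simp add: cinner_prod_def)

section \<open>Orthogonal projection onto closed subspaces\<close>

lemma csubspace_0: "csubspace S \<Longrightarrow> 0 \<in> S"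
  unfolding csubspace_def by blast

lemma csubspace_add: "csubspace S \<Longrightarrow> x \<in> S \<Longrightarrow> y \<in> S \<Longrightarrow> x + y \<in> S"
  unfolding csubspace_def by blast

lemma csubspace_scaleC: "csubspace S \<Longrightarrow> x \<in> S \<Longrightarrow> scaleC c x \<in> S"
  unfolding csubspace_def by blast

lemma csubspace_scaleR: "csubspace S \<Longrightarrow> x \<in> S \<Longrightarrow> scaleR r x \<in> S"
  unfolding csubspace_def scaleR_scaleC by blast

lemma csubspace_diff: "csubspace S \<Longrightarrow> x \<in> S \<Longrightarrow> y \<in> S \<Longrightarrow> x - y \<in> S"
  unfolding csubspace_def by (metis diff_conv_add_uminus scaleC_minus1_left)

text \<open>The midpoint of \<open>s\<close> and \<open>t\<close> lies in \<open>S\<close>, so the parallelogram law bounds \<open>\<parallel>s - t\<parallel>\<close>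
  by how far \<open>s\<close> and \<open>t\<close> are from being nearest points to \<open>x\<close>.\<close>
lemma csubspace_norm_diff_le_infdist:
  fixes S :: "'a::complex_inner set"
  assumes "csubspace S" "s \<in> S" "t \<in> S"
  shows "(norm (s - t))\<^sup>2 \<le> 2 * (norm (x - s))\<^sup>2 + 2 * (norm (x - t))\<^sup>2 - 4 * (infdist x S)\<^sup>2"
proof -
  have "scaleR (1/2) (s + t) \<in> S"
    using assms by (intro csubspace_scaleR csubspace_add)
  then have "infdist x S \<le> norm (x - scaleR (1/2) (s + t))"
    using infdist_le by (metis dist_norm)
  also have "x - scaleR (1/2) (s + t) = scaleR (1/2) ((x - s) + (x - t))"
    by (simp add: algebra_simps) (simp flip: scaleR_add_left)
  finally have "2 * infdist x S \<le> norm ((x - s) + (x - t))"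
    by simp
  then have "(2 * infdist x S)\<^sup>2 \<le> (norm ((x - s) + (x - t)))\<^sup>2"
    using infdist_nonneg by (intro power_mono) auto
  then have "4 * (infdist x S)\<^sup>2 \<le> (norm ((x - s) + (x - t)))\<^sup>2"
    by (simp add: power_mult_distrib)
  moreover have "(norm ((x - s) + (x - t)))\<^sup>2 + (norm (s - t))\<^sup>2
      = 2 * (norm (x - s))\<^sup>2 + 2 * (norm (x - t))\<^sup>2"
    using parallelogram_law[of "x - s" "x - t"] by (simp add: norm_minus_commute)
  ultimately show ?thesis by linarith
qed

lemma csubspace_minimizing_seq_Cauchy:
  fixes S :: "'a::complex_inner set"
  assumes S: "csubspace S"
    and s: "\<And>n. s n \<in> S" "\<And>n. (norm (x - s n))\<^sup>2 < (infdist x S)\<^sup>2 + 1 / Suc n"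
  shows "Cauchy s"
proof (rule metric_CauchyI)
  fix e :: real assume e: "e > 0"
  obtain M :: nat where "4 / e\<^sup>2 < M" using reals_Archimedean2 by blast
  then have "4 < real M * e\<^sup>2" using e by (simp add: pos_divide_less_eq)
  also have "\<dots> \<le> real (Suc M) * e\<^sup>2" by (intro mult_right_mono) auto
  finally have M: "4 / real (Suc M) < e\<^sup>2" by (simp add: pos_divide_less_eq mult.commute)
  have "dist (s m) (s n) < e" if "m \<ge> M" "n \<ge> M" for m n
  proof -
    have "(norm (s m - s n))\<^sup>2 \<le> 2 / Suc m + 2 / Suc n"
      using csubspace_norm_diff_le_infdist[OF S s(1)[of m] s(1)[of n], of x] s(2)[of m] s(2)[of n]
      by linarith
    also have "\<dots> \<le> 2 / Suc M + 2 / Suc M" using that by (intro add_mono frac_le) auto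
    also have "\<dots> < e\<^sup>2" using M by simp
    finally show ?thesis using e by (simp add: dist_norm power_less_imp_less_base)
  qed
  then show "\<exists>M. \<forall>m\<ge>M. \<forall>n\<ge>M. dist (s m) (s n) < e" by blast
qed

lemma closed_csubspace_nearest_point:
  fixes S :: "'a::chilbert_space set"
  assumes S: "csubspace S" "closed S"
  obtains p where "p \<in> S" "\<And>s. s \<in> S \<Longrightarrow> norm (x - p) \<le> norm (x - s)"
proof -
  define d where "d = infdist x S"
  have "\<exists>s\<in>S. (norm (x - s))\<^sup>2 < d\<^sup>2 + 1 / Suc n" for n
  proof -
    have ne: "S \<noteq> {}" using csubspace_0[OF S(1)] by blast
    have "(INF s\<in>S. dist x s) < sqrt (d\<^sup>2 + 1 / Suc n)"
      unfolding d_def infdist_notempty[OF ne, symmetric] by (rule real_less_rsqrt) simp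
    then obtain s where "s \<in> S" and "norm (x - s) < sqrt (d\<^sup>2 + 1 / Suc n)"
      using cINF_less_iff[OF ne bdd_belowI2[of _ 0 "dist x"]] by (auto simp: dist_norm)
    then have "(norm (x - s))\<^sup>2 < (sqrt (d\<^sup>2 + 1 / Suc n))\<^sup>2"
      by (intro power_strict_mono) auto
    then show ?thesis using \<open>s \<in> S\<close> by auto
  qed
  then obtain s where s: "\<And>n. s n \<in> S" "\<And>n. (norm (x - s n))\<^sup>2 < d\<^sup>2 + 1 / Suc n"
    by metis
  have "Cauchy s"
    using csubspace_minimizing_seq_Cauchy[OF S(1)] s unfolding d_def by blast
  then obtain p where p: "s \<longlonglongrightarrow> p" using Cauchy_convergent_iff convergent_def by blast
  have "p \<in> S" using closed_sequentially[OF S(2)] s(1) p by blast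
  moreover have "norm (x - p) \<le> d"
  proof -
    have "(\<lambda>n. (norm (x - s n))\<^sup>2) \<longlonglongrightarrow> (norm (x - p))\<^sup>2" using p by (intro tendsto_intros)
    moreover have "(\<lambda>n. d\<^sup>2 + 1 / Suc n) \<longlonglongrightarrow> d\<^sup>2 + 0"
      by (intro tendsto_intros LIMSEQ_Suc[OF lim_inverse_n'[unfolded inverse_eq_divide]])
    ultimately have "(norm (x - p))\<^sup>2 \<le> d\<^sup>2"
      using s(2) by (intro LIMSEQ_le) (auto intro: less_imp_le)
    then show ?thesis using infdist_nonneg[of x S] by (simp add: d_def power2_le_iff_abs_le)
  qed
  ultimately show ?thesis using that infdist_le by (metis d_def dist_norm order_trans)
qed

lemma nearest_point_orthogonal:
  fixes S :: "'a::complex_inner set"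
  assumes S: "csubspace S" and p: "p \<in> S" "\<And>s. s \<in> S \<Longrightarrow> norm (x - p) \<le> norm (x - s)"
    and s: "s \<in> S"
  shows "cinner s (x - p) = 0"
proof (cases "s = 0")
  case False
  define t where "t = cinner (x - p) s / (norm s)\<^sup>2"
  have "p + scaleC t s \<in> S" using S p s by (intro csubspace_add csubspace_scaleC)
  then have "(norm (x - p))\<^sup>2 \<le> (norm (x - p - scaleC t s))\<^sup>2"
    using p(2) by (metis diff_diff_eq norm_ge_zero power_mono)
  then have "(cmod (cinner (x - p) s))\<^sup>2 / (norm s)\<^sup>2 \<le> 0"
    using norm_diff_projection_squared[OF False, of "x - p"] unfolding t_def by linarith
  then have "cinner (x - p) s = 0" using False by (simp add: divide_le_0_iff)
  then show ?thesis by (metis cinner_commute complex_cnj_zero)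
qed simp

lemma closed_csubspace_eq_UNIV:
  fixes S :: "'a::chilbert_space set"
  assumes S: "csubspace S" "closed S" and orth: "\<And>w. (\<forall>s\<in>S. cinner s w = 0) \<Longrightarrow> w = 0"
  shows "S = UNIV"
proof -
  have "x \<in> S" for x
  proof -
    obtain p where "p \<in> S" "\<And>s. s \<in> S \<Longrightarrow> norm (x - p) \<le> norm (x - s)"
      using closed_csubspace_nearest_point[OF S] by metis
    moreover from this have "x - p = 0"
      using orth nearest_point_orthogonal[OF S(1)] by blast
    ultimately show ?thesis by simp
  qed
  then show ?thesis by blast
qed

section \<open>Self-adjoint relations\<close>

lemma closed_adjoint_rel: "closed (adjoint_rel (T :: ('h::complex_inner \<times> 'h) set))"
proof -
  have "adjoint_rel T = (\<Inter>q\<in>T. {p. cinner (snd q) (fst p) = cinner (fst q) (snd p)})"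
    unfolding adjoint_rel_def by (auto simp: case_prod_unfold)
  moreover have "closed \<dots>"
    by (intro closed_INT ballI closed_Collect_eq continuous_intros)
  ultimately show ?thesis by simp
qed

lemma symmetric_rel_Im_cinner:
  assumes "T \<subseteq> adjoint_rel T" "(x, y) \<in> T"
  shows "Im (cinner y x) = 0"
proof -
  have "cinner y x = cinner x y" using assms unfolding adjoint_rel_def by blast
  then have "cinner y x = cnj (cinner y x)" by (metis cinner_commute)
  then show ?thesis by (metis cnj.sel(2) neg_equal_zero)
qed

lemma symmetric_rel_resolvent_bound:
  assumes "T \<subseteq> adjoint_rel T" "(x, y) \<in> T"
  shows "\<bar>Im z\<bar> * norm x \<le> norm (y - scaleC z x)"
proof -
  have "Im (cinner (y - scaleC z x) x) = - Im z * (norm x)\<^sup>2"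
    using symmetric_rel_Im_cinner[OF assms] by (simp add: cinner_simps cinner_self_norm)
  then have "\<bar>Im z\<bar> * norm x * norm x = \<bar>Im (cinner (y - scaleC z x) x)\<bar>"
    by (simp add: abs_mult power2_eq_square)
  also have "\<dots> \<le> norm (y - scaleC z x) * norm x"
    using abs_Im_le_cmod cauchy_schwarz order_trans by blast
  finally show ?thesis
    by (cases "x = 0") (simp_all add: mult_le_cancel_right)
qed

lemma csubspace_resolvent_range:
  assumes "csubspace T"
  shows "csubspace ((\<lambda>(x, y). y - scaleC z x) ` T)"
  unfolding csubspace_def
proof (intro conjI ballI allI)
  have "(0, 0) \<in> T" using csubspace_0[OF assms] by (simp add: zero_prod_def)
  then show "0 \<in> (\<lambda>(x, y). y - scaleC z x) ` T" by force
next
  fix p q assume "p \<in> (\<lambda>(x, y). y - scaleC z x) ` T" "q \<in> (\<lambda>(x, y). y - scaleC z x) ` T"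
  then obtain x y x' y' where "(x, y) \<in> T" "(x', y') \<in> T" "p = y - scaleC z x" "q = y' - scaleC z x'"
    by auto
  moreover have "(x + x', y + y') \<in> T" using csubspace_add[OF assms calculation(1,2)] by simp
  ultimately show "p + q \<in> (\<lambda>(x, y). y - scaleC z x) ` T"
    by (force simp: scaleC_add_right algebra_simps)
next
  fix c p assume "p \<in> (\<lambda>(x, y). y - scaleC z x) ` T"
  then obtain x y where "(x, y) \<in> T" "p = y - scaleC z x" by auto
  moreover have "(scaleC c x, scaleC c y) \<in> T" using csubspace_scaleC[OF assms calculation(1)]
    by (simp add: scaleC_prod_def)
  ultimately show "scaleC c p \<in> (\<lambda>(x, y). y - scaleC z x) ` T"
    by (force simp: scaleC_diff_right scaleC_scaleC mult.commute)
qed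

text \<open>The resolvent bound makes the first components of a sequence in \<open>T\<close> Cauchy once the
  images under \<open>T - z\<close> are, so closedness of \<open>T\<close> carries over to the range.\<close>
lemma closed_resolvent_range:
  fixes T :: "('h::chilbert_space \<times> 'h) set"
  assumes T: "csubspace T" "closed T" "T \<subseteq> adjoint_rel T" and z: "Im z \<noteq> 0"
  shows "closed ((\<lambda>(x, y). y - scaleC z x) ` T)"
proof (rule closed_sequential_limits[THEN iffD2], intro allI impI, elim conjE)
  fix v l assume v: "\<forall>n. v n \<in> (\<lambda>(x, y). y - scaleC z x) ` T" and vl: "v \<longlonglongrightarrow> l"
  have "\<forall>n. \<exists>x y. (x, y) \<in> T \<and> v n = y - scaleC z x" using v by force
  then obtain x y where xy: "\<And>n. (x n, y n) \<in> T" "\<And>n. v n = y n - scaleC z (x n)"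
    by metis
  have "Cauchy x"
  proof (rule metric_CauchyI)
    fix r :: real assume "r > 0"
    then obtain M where M: "\<And>m n. m \<ge> M \<Longrightarrow> n \<ge> M \<Longrightarrow> dist (v m) (v n) < r * \<bar>Im z\<bar>"
      using z metric_CauchyD[OF LIMSEQ_imp_Cauchy[OF vl], of "r * \<bar>Im z\<bar>"] by auto
    have "dist (x m) (x n) < r" if "m \<ge> M" "n \<ge> M" for m n
    proof -
      have "(x m - x n, y m - y n) \<in> T" using csubspace_diff[OF T(1) xy(1) xy(1)] by simp
      then have "\<bar>Im z\<bar> * norm (x m - x n) \<le> norm ((y m - y n) - scaleC z (x m - x n))"
        by (rule symmetric_rel_resolvent_bound[OF T(3)])
      also have "(y m - y n) - scaleC z (x m - x n) = v m - v n"
        by (simp add: xy(2) scaleC_diff_right algebra_simps)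
      finally have "\<bar>Im z\<bar> * dist (x m) (x n) \<le> dist (v m) (v n)"
        by (simp add: dist_norm)
      also have "\<dots> < r * \<bar>Im z\<bar>" using M that .
      finally show ?thesis using z by (simp add: mult.commute)
    qed
    then show "\<exists>M. \<forall>m\<ge>M. \<forall>n\<ge>M. dist (x m) (x n) < r" by blast
  qed
  then obtain p where p: "x \<longlonglongrightarrow> p" using Cauchy_convergent_iff convergent_def by blast
  have "(\<lambda>n. (x n, v n + scaleC z (x n))) \<longlonglongrightarrow> (p, l + scaleC z p)"
    using p vl by (intro tendsto_intros)
  then have "(\<lambda>n. (x n, y n)) \<longlonglongrightarrow> (p, l + scaleC z p)" by (simp add: xy(2))
  with xy(1) have "(p, l + scaleC z p) \<in> T" by (rule closed_sequentially[OF T(2)])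
  then show "l \<in> (\<lambda>(x, y). y - scaleC z x) ` T" by force
qed

lemma selfadjoint_rel_resolvent_range:
  fixes T :: "('h::chilbert_space \<times> 'h) set"
  assumes T: "csubspace T" "adjoint_rel T = T" and z: "Im z \<noteq> 0"
  shows "(\<lambda>(x, y). y - scaleC z x) ` T = UNIV"
proof (rule closed_csubspace_eq_UNIV)
  show "closed ((\<lambda>(x, y). y - scaleC z x) ` T)"
    using closed_adjoint_rel[of T] T z by (intro closed_resolvent_range) auto
next
  txt \<open>A vector orthogonal to the range gives \<open>{w, z\<^sup>* w} \<in> T\<^sup>* = T\<close>, and symmetry of \<open>T\<close> then
    forces \<open>Im z \<parallel>w\<parallel>\<^sup>2 = 0\<close>.\<close>
  fix w assume w: "\<forall>s\<in>(\<lambda>(x, y). y - scaleC z x) ` T. cinner s w = 0"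
  have "(w, scaleC (cnj z) w) \<in> adjoint_rel T"
    using w by (auto simp: adjoint_rel_def cinner_simps)
  then have "Im (cinner (scaleC (cnj z) w) w) = 0"
    using symmetric_rel_Im_cinner T by (metis order_refl)
  then show "w = 0" using z by (simp add: cinner_scaleC_left cinner_self_norm)
qed (rule csubspace_resolvent_range[OF T(1)])

lemma selfadjoint_rel_resolvent_solve:
  fixes T :: "('h::chilbert_space \<times> 'h) set"
  assumes "csubspace T" "adjoint_rel T = T" and "Im z \<noteq> 0"
  obtains x y where "(x, y) \<in> T" "y - scaleC z x = u" "\<bar>Im z\<bar> * norm x \<le> norm u"
proof -
  have "u \<in> (\<lambda>(x, y). y - scaleC z x) ` T"
    using selfadjoint_rel_resolvent_range[OF assms] by simp
  then obtain x y where "(x, y) \<in> T" "y - scaleC z x = u" by auto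
  moreover have "\<bar>Im z\<bar> * norm x \<le> norm u"
    using symmetric_rel_resolvent_bound[of T] \<open>adjoint_rel T = T\<close> calculation by blast
  ultimately show ?thesis using that by blast
qed

section \<open>Unitary boundary relations and their main transform\<close>

text \<open>Green's identity \<open>(f', g) - (f, g') = (h', k) - (h, k')\<close> for \<open>\<Gamma>\<close> becomes the symmetry
  identity \<open>((f', -h'), (g, k)) = ((f, h), (g', -k'))\<close> for the main transform.\<close>
definition main_transform ::
  "(('h \<times> 'h) \<times> ('k \<times> 'k)) set \<Rightarrow> (('h \<times> 'k) \<times> ('h \<times> 'k::complex_vector)) set" where
  "main_transform \<Gamma> = {((f, h), (f', - h')) | f f' h h'. ((f, f'), (h, h')) \<in> \<Gamma>}"

lemma main_transform_iff:
  "((f, h), (f', h')) \<in> main_transform \<Gamma> \<longleftrightarrow> ((f, f'), (h, - h')) \<in> \<Gamma>"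
  unfolding main_transform_def by (auto intro!: exI[of _ "- h'"])

lemma mem_main_transform:
  fixes \<Gamma> :: "(('h \<times> 'h) \<times> ('k::complex_vector \<times> 'k)) set"
  shows "p \<in> main_transform \<Gamma> \<longleftrightarrow> ((fst (fst p), fst (snd p)), (snd (fst p), - snd (snd p))) \<in> \<Gamma>"
  using main_transform_iff[of "fst (fst p)" "snd (fst p)" "fst (snd p)" "snd (snd p)"] by simp

lemma csubspace_main_transform:
  fixes \<Gamma> :: "(('h::complex_vector \<times> 'h) \<times> ('k::complex_vector \<times> 'k)) set"
  assumes \<Gamma>: "csubspace \<Gamma>"
  shows "csubspace (main_transform \<Gamma>)"
  unfolding csubspace_def
proof (intro conjI ballI allI)
  show "0 \<in> main_transform \<Gamma>"
    using csubspace_0[OF \<Gamma>] by (simp add: mem_main_transform zero_prod_def)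
  show "p + q \<in> main_transform \<Gamma>" if "p \<in> main_transform \<Gamma>" "q \<in> main_transform \<Gamma>" for p q
    using csubspace_add[OF \<Gamma>] that by (fastforce simp: mem_main_transform)
  show "scaleC c p \<in> main_transform \<Gamma>" if "p \<in> main_transform \<Gamma>" for c p
    using csubspace_scaleC[OF \<Gamma> that[unfolded mem_main_transform], of c]
    by (simp add: mem_main_transform scaleC_prod_def scaleC_minus_right)
qed

lemma ball_main_transform:
  "(\<forall>(x, y)\<in>main_transform \<Gamma>. P x y) \<longleftrightarrow> (\<forall>((f, f'), (h, h'))\<in>\<Gamma>. P (f, h) (f', - h'))"
  unfolding main_transform_def by auto

lemma adjoint_rel_main_transform:
  fixes \<Gamma> :: "(('h::complex_inner \<times> 'h) \<times> ('k::complex_inner \<times> 'k)) set"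
  assumes unitary: "converse \<Gamma> = bt_adjoint \<Gamma>"
  shows "adjoint_rel (main_transform \<Gamma>) = main_transform \<Gamma>"
proof -
  have green: "cinner (f', - h') (g, k) = cinner (f, h) (g', k')
      \<longleftrightarrow> cinner f' g - cinner f g' = cinner h' k - cinner h (- k')"
    for f f' g g' :: 'h and h h' k k' :: 'k
    by (auto simp: cinner_Pair cinner_minus_left cinner_minus_right algebra_simps)
  have "((g, k), (g', k')) \<in> adjoint_rel (main_transform \<Gamma>)
      \<longleftrightarrow> ((k, - k'), (g, g')) \<in> bt_adjoint \<Gamma>" for g g' k k'
    unfolding adjoint_rel_def bt_adjoint_def mem_Collect_eq prod.case ball_main_transform green ..
  then have "((g, k), (g', k')) \<in> adjoint_rel (main_transform \<Gamma>)
      \<longleftrightarrow> ((g, k), (g', k')) \<in> main_transform \<Gamma>" for g g' k k'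
    unfolding main_transform_iff unitary[symmetric] by simp
  then show ?thesis by (intro set_eqI) (metis prod.collapse)
qed

lemma unitary_rel_Im_weyl:
  fixes \<Gamma> :: "(('h::complex_inner \<times> 'h) \<times> ('k::complex_inner \<times> 'k)) set"
  assumes unitary: "converse \<Gamma> = bt_adjoint \<Gamma>" and "((f, scaleC z f), (h, h')) \<in> \<Gamma>"
  shows "Im (cinner h' h) = Im z * (norm f)\<^sup>2"
proof -
  have "((f, h), (scaleC z f, - h')) \<in> main_transform \<Gamma>"
    using assms(2) by (simp add: main_transform_iff)
  then have "Im (cinner (scaleC z f, - h') (f, h)) = 0"
    using adjoint_rel_main_transform[OF unitary] by (intro symmetric_rel_Im_cinner) auto
  then show ?thesis by (simp add: cinner_Pair cinner_simps cinner_self_norm)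
qed

lemma unitary_rel_resolvent_solve_seq:
  fixes \<Gamma> :: "(('h::chilbert_space \<times> 'h) \<times> ('k::chilbert_space \<times> 'k)) set"
  assumes \<Gamma>: "csubspace \<Gamma>" and unitary: "converse \<Gamma> = bt_adjoint \<Gamma>" and z: "Im z \<noteq> 0"
    and u0: "u \<longlonglongrightarrow> 0"
  obtains a a' b b' where "\<And>n. ((a n, a' n), (b n, b' n)) \<in> \<Gamma>" "\<And>n. a' n - scaleC z (a n) = u n"
    "a \<longlonglongrightarrow> 0" "b \<longlonglongrightarrow> 0"
proof -
  have "\<exists>p q. (p, q) \<in> main_transform \<Gamma> \<and> q - scaleC z p = (u n, 0)
      \<and> \<bar>Im z\<bar> * norm p \<le> norm (u n)" for n
  proof -
    obtain p q where "(p, q) \<in> main_transform \<Gamma>" "q - scaleC z p = (u n, 0)"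
      "\<bar>Im z\<bar> * norm p \<le> norm (u n, 0::'k)"
      by (rule selfadjoint_rel_resolvent_solve[OF csubspace_main_transform[OF \<Gamma>]
            adjoint_rel_main_transform[OF unitary] z])
    then show ?thesis by (intro exI[of _ p] exI[of _ q]) (simp add: norm_Pair)
  qed
  then obtain p q where pq: "\<And>n. (p n, q n) \<in> main_transform \<Gamma>"
    "\<And>n. q n - scaleC z (p n) = (u n, 0)" "\<And>n. \<bar>Im z\<bar> * norm (p n) \<le> norm (u n)"
    by metis
  have "p \<longlonglongrightarrow> 0"
  proof (rule Lim_null_comparison)
    show "\<forall>\<^sub>F n in sequentially. norm (p n) \<le> norm (u n) / \<bar>Im z\<bar>"
      using pq(3) z by (simp add: pos_le_divide_eq mult.commute)
    show "(\<lambda>n. norm (u n) / \<bar>Im z\<bar>) \<longlonglongrightarrow> 0"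
      using tendsto_divide[OF tendsto_norm[OF u0] tendsto_const] z by simp
  qed
  moreover have "((fst (p n), fst (q n)), (snd (p n), - snd (q n))) \<in> \<Gamma>" for n
    using pq(1) by (simp add: mem_main_transform)
  moreover have "fst (q n) - scaleC z (fst (p n)) = u n" for n
    using pq(2)[of n] by (simp add: prod_eq_iff)
  ultimately show ?thesis
    using that[of "\<lambda>n. fst (p n)" "\<lambda>n. fst (q n)" "\<lambda>n. snd (p n)" "\<lambda>n. - snd (q n)"]
      tendsto_fst[of p 0] tendsto_snd[of p 0] by simp
qed

section \<open>Closability of \<open>\<Gamma>\<^sub>0\<close>\<close>

lemma closable_Gamma0_iff:
  fixes \<Gamma> :: "(('h::complex_inner \<times> 'h) \<times> ('k::complex_inner \<times> 'k)) set"
  assumes \<Gamma>: "csubspace \<Gamma>"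
  shows "closable (Gamma0 \<Gamma>) \<longleftrightarrow>
    (\<forall>(x :: nat \<Rightarrow> 'h \<times> 'h) y y0. (\<forall>n. (x n, y n) \<in> Gamma0 \<Gamma>) \<and> x \<longlonglongrightarrow> 0 \<and> y \<longlonglongrightarrow> y0 \<longrightarrow> y0 = 0)"
proof (intro iffI allI impI)
  fix x :: "nat \<Rightarrow> 'h \<times> 'h" and y y0
  assume "closable (Gamma0 \<Gamma>)" and "(\<forall>n. (x n, y n) \<in> Gamma0 \<Gamma>) \<and> x \<longlonglongrightarrow> 0 \<and> y \<longlonglongrightarrow> y0"
  moreover from this have "(0, y0) \<in> closure (Gamma0 \<Gamma>)"
    unfolding closure_sequential by (intro exI[of _ "\<lambda>n. (x n, y n)"]) (simp add: tendsto_Pair)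
  moreover have "(0, 0) \<in> closure (Gamma0 \<Gamma>)"
    using csubspace_0[OF \<Gamma>] closure_subset by (fastforce simp: Gamma0_def zero_prod_def)
  ultimately show "y0 = 0" unfolding closable_def is_operator_def by blast
next
  assume H: "\<forall>(x :: nat \<Rightarrow> 'h \<times> 'h) y y0. (\<forall>n. (x n, y n) \<in> Gamma0 \<Gamma>) \<and> x \<longlonglongrightarrow> 0 \<and> y \<longlonglongrightarrow> y0 \<longrightarrow> y0 = 0"
  show "closable (Gamma0 \<Gamma>)" unfolding closable_def is_operator_def
  proof (intro allI impI)
    fix a b c assume "(a, b) \<in> closure (Gamma0 \<Gamma>)" "(a, c) \<in> closure (Gamma0 \<Gamma>)"
    then obtain p q where p: "\<forall>n. p n \<in> Gamma0 \<Gamma>" "p \<longlonglongrightarrow> (a, b)"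
      and q: "\<forall>n. q n \<in> Gamma0 \<Gamma>" "q \<longlonglongrightarrow> (a, c)"
      unfolding closure_sequential by blast
    have "(fst (p n) - fst (q n), snd (p n) - snd (q n)) \<in> Gamma0 \<Gamma>" for n
    proof -
      obtain u v where "(fst (p n), (snd (p n), u)) \<in> \<Gamma>" "(fst (q n), (snd (q n), v)) \<in> \<Gamma>"
        using p(1) q(1) unfolding Gamma0_def by (simp add: case_prod_unfold) blast
      from csubspace_diff[OF \<Gamma> this] show ?thesis unfolding Gamma0_def by auto
    qed
    moreover have "(\<lambda>n. fst (p n) - fst (q n)) \<longlonglongrightarrow> 0"
      using tendsto_diff[OF tendsto_fst[OF p(2)] tendsto_fst[OF q(2)]] by simp
    moreover have "(\<lambda>n. snd (p n) - snd (q n)) \<longlonglongrightarrow> b - c"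
      using tendsto_diff[OF tendsto_snd[OF p(2)] tendsto_snd[OF q(2)]] by simp
    ultimately show "b = c"
      using H[rule_format, of "\<lambda>n. fst (p n) - fst (q n)" "\<lambda>n. snd (p n) - snd (q n)" "b - c"] by simp
  qed
qed

definition weyl_closability_condition ::
  "(('h::complex_vector \<times> 'h) \<times> ('k::complex_inner \<times> 'k)) set \<Rightarrow> complex \<Rightarrow> bool" where
  "weyl_closability_condition \<Gamma> z \<longleftrightarrow>
     (\<forall>(h :: nat \<Rightarrow> 'k) h' h0. (\<forall>n. (h n, h' n) \<in> weyl_rel \<Gamma> z) \<and> h \<longlonglongrightarrow> h0 \<and>
        (\<lambda>n. Im (cinner (h' n) (h n))) \<longlonglongrightarrow> 0 \<longrightarrow> h0 = 0)"

lemma weyl_closability_condition_if_closable: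
  fixes \<Gamma> :: "(('h::complex_inner \<times> 'h) \<times> ('k::complex_inner \<times> 'k)) set"
  assumes \<Gamma>: "csubspace \<Gamma>" and unitary: "converse \<Gamma> = bt_adjoint \<Gamma>" and z: "Im z \<noteq> 0"
    and closable: "closable (Gamma0 \<Gamma>)"
  shows "weyl_closability_condition \<Gamma> z"
  unfolding weyl_closability_condition_def
proof (intro allI impI, elim conjE)
  fix h :: "nat \<Rightarrow> 'k" and h' h0
  assume "\<forall>n. (h n, h' n) \<in> weyl_rel \<Gamma> z" and h0: "h \<longlonglongrightarrow> h0"
    and Im: "(\<lambda>n. Im (cinner (h' n) (h n))) \<longlonglongrightarrow> 0"
  then obtain f where f: "\<And>n. ((f n, scaleC z (f n)), (h n, h' n)) \<in> \<Gamma>"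
    unfolding weyl_rel_def by simp metis
  have "(\<lambda>n. Im (cinner (h' n) (h n)) / Im z) \<longlonglongrightarrow> 0"
    using tendsto_divide[OF Im tendsto_const z] by simp
  then have "(\<lambda>n. sqrt ((norm (f n))\<^sup>2)) \<longlonglongrightarrow> sqrt 0"
    using unitary_rel_Im_weyl[OF unitary f] z by (intro tendsto_real_sqrt) simp
  then have "f \<longlonglongrightarrow> 0" by (simp add: tendsto_norm_zero_iff)
  then have "(\<lambda>n. (f n, scaleC z (f n))) \<longlonglongrightarrow> 0"
    using tendsto_Pair[OF _ tendsto_scaleC] by (fastforce simp: zero_prod_def)
  moreover have "\<forall>n. ((f n, scaleC z (f n)), h n) \<in> Gamma0 \<Gamma>"
    using f unfolding Gamma0_def by blast
  ultimately show "h0 = 0"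
    using closable h0 unfolding closable_Gamma0_iff[OF \<Gamma>]
    by (elim allE[of _ "\<lambda>n. (f n, scaleC z (f n))"] allE[of _ h]) blast
qed

lemma closable_if_weyl_closability_condition:
  fixes \<Gamma> :: "(('h::chilbert_space \<times> 'h) \<times> ('k::chilbert_space \<times> 'k)) set"
  assumes \<Gamma>: "csubspace \<Gamma>" and unitary: "converse \<Gamma> = bt_adjoint \<Gamma>" and z: "Im z \<noteq> 0"
    and weyl: "weyl_closability_condition \<Gamma> z"
  shows "closable (Gamma0 \<Gamma>)"
  unfolding closable_Gamma0_iff[OF \<Gamma>]
proof (intro allI impI, elim conjE)
  fix x :: "nat \<Rightarrow> 'h \<times> 'h" and y y0
  assume "\<forall>n. (x n, y n) \<in> Gamma0 \<Gamma>" and x0: "x \<longlonglongrightarrow> 0" and y0: "y \<longlonglongrightarrow> y0"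
  then obtain y' where xy: "\<And>n. (x n, (y n, y' n)) \<in> \<Gamma>"
    unfolding Gamma0_def by simp metis
  define u where "u n = snd (x n) - scaleC z (fst (x n))" for n
  have u0: "u \<longlonglongrightarrow> 0"
    unfolding u_def using tendsto_diff[OF tendsto_snd[OF x0] tendsto_scaleC[OF tendsto_fst[OF x0]]]
    by simp
  obtain a a' b b' where ab: "\<And>n. ((a n, a' n), (b n, b' n)) \<in> \<Gamma>"
    "\<And>n. a' n - scaleC z (a n) = u n" and a0: "a \<longlonglongrightarrow> 0" and b0: "b \<longlonglongrightarrow> 0"
    using unitary_rel_resolvent_solve_seq[OF \<Gamma> unitary z u0] by blast
  define f where "f n = fst (x n) - a n" for n
  have "x n - (a n, a' n) = (f n, scaleC z (f n))" for n
    using ab(2)[of n] by (simp add: f_def u_def prod_eq_iff scaleC_diff_right algebra_simps)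
  then have weyl_seq: "((f n, scaleC z (f n)), (y n - b n, y' n - b' n)) \<in> \<Gamma>" for n
    using csubspace_diff[OF \<Gamma> xy[of n] ab(1)[of n]] by simp
  have f0: "f \<longlonglongrightarrow> 0"
    unfolding f_def using tendsto_diff[OF tendsto_fst[OF x0] a0] by simp
  have "(\<lambda>n. Im z * (norm (f n))\<^sup>2) \<longlonglongrightarrow> 0"
    using tendsto_mult[OF tendsto_const tendsto_power[OF tendsto_norm[OF f0]], of "Im z" 2] by simp
  then have "(\<lambda>n. Im (cinner (y' n - b' n) (y n - b n))) \<longlonglongrightarrow> 0"
    using unitary_rel_Im_weyl[OF unitary weyl_seq] by simp
  moreover have "(\<lambda>n. y n - b n) \<longlonglongrightarrow> y0"
    using tendsto_diff[OF y0 b0] by simp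
  moreover have "\<forall>n. (y n - b n, y' n - b' n) \<in> weyl_rel \<Gamma> z"
    using weyl_seq unfolding weyl_rel_def by blast
  ultimately show "y0 = 0"
    using weyl unfolding weyl_closability_condition_def
    by (elim allE[of _ "\<lambda>n. y n - b n"] allE[of _ "\<lambda>n. y' n - b' n"]) blast
qed

lemma closable_Gamma0_iff_weyl_closability_condition:
  fixes \<Gamma> :: "(('h::chilbert_space \<times> 'h) \<times> ('k::chilbert_space \<times> 'k)) set"
  assumes "csubspace \<Gamma>" "converse \<Gamma> = bt_adjoint \<Gamma>" "Im z \<noteq> 0"
  shows "closable (Gamma0 \<Gamma>) \<longleftrightarrow> weyl_closability_condition \<Gamma> z"
  using weyl_closability_condition_if_closable[OF assms] closable_if_weyl_closability_condition[OF assms]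
  by blast

theorem mainTheorem9:
  fixes A :: "('h::chilbert_space \<times> 'h) set"
    and \<Gamma> :: "(('h \<times> 'h) \<times> ('k::chilbert_space \<times> 'k)) set"
  assumes "closed_symmetric_rel A"
    and "unitary_boundary_triple A \<Gamma>"
  shows "(closable (Gamma0 \<Gamma>) \<longleftrightarrow>
            (\<exists>z. Im z \<noteq> 0 \<and>
               (\<forall>(h :: nat \<Rightarrow> 'k) h' h0. (\<forall>n. (h n, h' n) \<in> weyl_rel \<Gamma> z) \<and> h \<longlonglongrightarrow> h0 \<and>
                   (\<lambda>n. Im (cinner (h' n) (h n))) \<longlonglongrightarrow> 0 \<longrightarrow> h0 = 0)))
       \<and> (closable (Gamma0 \<Gamma>) \<longleftrightarrow>
            (\<forall>z. Im z \<noteq> 0 \<longrightarrow>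
               (\<forall>(h :: nat \<Rightarrow> 'k) h' h0. (\<forall>n. (h n, h' n) \<in> weyl_rel \<Gamma> z) \<and> h \<longlonglongrightarrow> h0 \<and>
                   (\<lambda>n. Im (cinner (h' n) (h n))) \<longlonglongrightarrow> 0 \<longrightarrow> h0 = 0)))"
proof -
  have "csubspace \<Gamma>" and "converse \<Gamma> = bt_adjoint \<Gamma>"
    using assms(2) unfolding unitary_boundary_triple_def by auto
  then have "closable (Gamma0 \<Gamma>) \<longleftrightarrow> weyl_closability_condition \<Gamma> z" if "Im z \<noteq> 0" for z
    using closable_Gamma0_iff_weyl_closability_condition that by blast
  moreover have "Im \<i> \<noteq> 0" by simp
  ultimately show ?thesis
    unfolding weyl_closability_condition_def[symmetric] by blast
qed

end
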